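(* Let $p\ge2$ and consider the weighted acyclic directed graph described in the context, with sources $A_k$ and sinks $B_k$. For every $m\in\{0,\ldots,p-1\}$ and $n\in\mathbb N$, there is a unique configuration of pairwise vertex-disjoint (non-intersecting) directed paths connecting the sources $A_m,A_{m+1},\ldots,A_{m+n}$ to the sinks $B_0,B_1,\ldots,B_n$: for each $i\in\{0,\ldots,n\}$, the source $A_{m+i}$ is connected to the sink $B_i$ by the highest possible path, which passes through $(-m,m+ip)$. The weight of this configuration is $\prod_{i=0}^n\prod_{j=1}^{ip+m}V_j$.
   Context: Let $p\ge2$ and let $(V_l)_{l\ge1}$ be formal variables. Consider the directed graph whose vertices are the $(k,l)\in\mathbb Z\times\mathbb N$ with $k+l\equiv0 \pmod p$, whose edges are the rises $(k,l)\to(k+1,l+p-1)$, of weight $1$, and the falls $(k,l)\to(k+1,l-1)$ (for $l\ge1$), of weight $V_l$; the weight of a path is the product of its edge weights and the weight of a configuration of paths is the product of the path weights. For $k\in\mathbb N$ let $q_k=\lfloor k/(p-1)\rfloor$ and $r_k=k-(p-1)q_k$, and set $A_k:=(-k-q_k,r_k)=(-pq_k-r_k,r_k)$ and $B_k:=(kp,0)$. *)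

theory Defs
  imports Main
begin

type_synonym vertex = "int \<times> nat"

definition is_vertex :: "nat \<Rightarrow> vertex \<Rightarrow> bool" where
  "is_vertex p v \<longleftrightarrow> (fst v + int (snd v)) mod int p = 0"

definition is_rise :: "nat \<Rightarrow> vertex \<Rightarrow> vertex \<Rightarrow> bool" where
  "is_rise p u v \<longleftrightarrow> fst v = fst u + 1 \<and> snd v = snd u + (p - 1)"

definition is_fall :: "nat \<Rightarrow> vertex \<Rightarrow> vertex \<Rightarrow> bool" where
  "is_fall p u v \<longleftrightarrow> fst v = fst u + 1 \<and> snd u \<ge> 1 \<and> snd v = snd u - 1"

definition is_edge :: "nat \<Rightarrow> vertex \<Rightarrow> vertex \<Rightarrow> bool" where
  "is_edge p u v \<longleftrightarrow> is_vertex p u \<and> is_vertex p v \<and> (is_rise p u v \<or> is_fall p u v)"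

definition edge_weight :: "nat \<Rightarrow> (nat \<Rightarrow> 'a::comm_semiring_1) \<Rightarrow> vertex \<Rightarrow> vertex \<Rightarrow> 'a" where
  "edge_weight p V u v = (if is_rise p u v then 1 else V (snd u))"

definition is_path :: "nat \<Rightarrow> vertex list \<Rightarrow> bool" where
  "is_path p xs \<longleftrightarrow> xs \<noteq> [] \<and> (\<forall>v\<in>set xs. is_vertex p v) \<and>
     (\<forall>i. Suc i < length xs \<longrightarrow> is_edge p (xs ! i) (xs ! Suc i))"

definition path_weight :: "nat \<Rightarrow> (nat \<Rightarrow> 'a::comm_semiring_1) \<Rightarrow> vertex list \<Rightarrow> 'a" where
  "path_weight p V xs = prod_list (map (\<lambda>(u, v). edge_weight p V u v) (zip xs (tl xs)))"

definition config_weight :: "nat \<Rightarrow> (nat \<Rightarrow> 'a::comm_semiring_1) \<Rightarrow> vertex list list \<Rightarrow> 'a" where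
  "config_weight p V Ps = prod_list (map (path_weight p V) Ps)"

definition src :: "nat \<Rightarrow> nat \<Rightarrow> vertex" where
  "src p k = (- int (k + k div (p - 1)), k mod (p - 1))"

definition snk :: "nat \<Rightarrow> nat \<Rightarrow> vertex" where
  "snk p k = (int (k * p), 0)"

text \<open>Configurations of pairwise vertex-disjoint paths: path i starts at A_(m+i),
  and the set of end points is exactly {B_0,...,B_n} (any matching of sources to sinks).\<close>
definition nonint_config :: "nat \<Rightarrow> nat \<Rightarrow> nat \<Rightarrow> vertex list list \<Rightarrow> bool" where
  "nonint_config p m n Ps \<longleftrightarrow> length Ps = n + 1 \<and>
     (\<forall>i\<le>n. is_path p (Ps ! i) \<and> hd (Ps ! i) = src p (m + i)) \<and>
     last ` set Ps = snk p ` {0..n} \<and>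
     (\<forall>i j. i < j \<and> j \<le> n \<longrightarrow> set (Ps ! i) \<inter> set (Ps ! j) = {})"

definition path_above :: "vertex list \<Rightarrow> vertex list \<Rightarrow> bool" where
  "path_above xs ys \<longleftrightarrow> (\<forall>(k, l)\<in>set ys. \<exists>l'. (k, l') \<in> set xs \<and> l \<le> l')"

end

theory Submission
  imports Defs
begin

text \<open>Columns advance by one at every step, so a path from \<open>A\<^sub>m\<^sub>+\<^sub>j\<close> to \<open>B\<^sub>s\<close> has a
  prescribed length and meets the column \<open>-m\<close> after \<open>peak_time p m j\<close> steps. Its height there is
  at most \<open>m + jp\<close> (steepest ascent from the source), at most \<open>m + sp\<close> (steepest descent
  into the sink) and congruent to \<open>m\<close> modulo \<open>p\<close>; as \<open>m < p\<close> it is \<open>m + \<tau>p\<close> with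
  \<open>\<tau> \<le> min j s\<close>. In a non-intersecting configuration these crossing points are distinct,
  so \<open>\<tau>\<close> is an injection with \<open>\<tau> j \<le> j\<close>, hence the identity; then the sink assignment is
  an injection \<open>\<sigma>\<close> with \<open>\<sigma> j \<ge> j\<close>, again the identity. Finally a path from
  \<open>A\<^sub>m\<^sub>+\<^sub>j\<close> to \<open>B\<^sub>j\<close> through \<open>(-m, m + jp)\<close> is squeezed between the two extreme slopes
  through that point: it is the tent that rises as long as possible and then falls to
  \<open>B\<^sub>j\<close>, whose falls contribute \<open>V\<^sub>1 \<cdots> V\<^sub>j\<^sub>p\<^sub>+\<^sub>m\<close>.\<close>

lemma is_path_ne: "is_path p xs \<Longrightarrow> xs \<noteq> []"
  by (simp add: is_path_def)

lemma is_path_nth_Suc: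
  assumes "is_path p xs" "Suc i < length xs"
  shows "fst (xs ! Suc i) = fst (xs ! i) + 1"
    and "snd (xs ! Suc i) = snd (xs ! i) + (p - 1) \<or>
         1 \<le> snd (xs ! i) \<and> snd (xs ! Suc i) = snd (xs ! i) - 1"
  using assms unfolding is_path_def is_edge_def is_rise_def is_fall_def by auto

lemma path_fst_nth:
  assumes "is_path p xs" "t < length xs"
  shows "fst (xs ! t) = fst (xs ! 0) + int t"
  using assms(2) by (induction t) (auto simp: is_path_nth_Suc(1)[OF assms(1)])

lemma path_snd_nth_rise_bound:
  assumes "is_path p xs" "t + d < length xs"
  shows "snd (xs ! (t + d)) \<le> snd (xs ! t) + (p - 1) * d"
  using assms(2)
proof (induction d)
  case (Suc d)
  then show ?case using is_path_nth_Suc(2)[OF assms(1), of "t + d"] by auto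
qed simp

lemma path_snd_nth_fall_bound:
  assumes "is_path p xs" "t + d < length xs"
  shows "snd (xs ! t) \<le> snd (xs ! (t + d)) + d"
  using assms(2)
proof (induction d)
  case (Suc d)
  then show ?case using is_path_nth_Suc(2)[OF assms(1), of "t + d"] by auto
qed simp

lemma path_weight_conv_prod:
  "path_weight p V xs = (\<Prod>i<length xs - 1. edge_weight p V (xs ! i) (xs ! Suc i))"
proof -
  have "zip xs (tl xs) = map (\<lambda>i. (xs ! i, xs ! Suc i)) [0..<length xs - 1]"
    by (rule nth_equalityI) (auto simp: nth_tl)
  then show ?thesis
    by (simp add: path_weight_def prod.distinct_set_conv_list[symmetric] atLeast0LessThan)
qed

lemma sum_inj_on_endo:
  fixes f :: "'a \<Rightarrow> 'a::comm_monoid_add"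
  assumes "finite A" "inj_on f A" "f ` A \<subseteq> A"
  shows "sum f A = sum id A"
  using sum.reindex[OF assms(2), of id] endo_inj_surj[OF assms(1,3,2)] by simp

lemma inj_on_endo_le_imp_id:
  fixes f :: "nat \<Rightarrow> nat"
  assumes "finite A" "inj_on f A" "f ` A \<subseteq> A" "\<And>j. j \<in> A \<Longrightarrow> f j \<le> j" "j \<in> A"
  shows "f j = j"
proof (rule ccontr)
  assume "f j \<noteq> j"
  then have "sum f A < sum id A"
    using assms(4,5)
    by (intro sum_strict_mono_ex1[OF assms(1)]) (auto intro!: bexI[of _ j] simp: le_neq_implies_less)
  then show False using sum_inj_on_endo[OF assms(1-3)] by simp
qed

lemma inj_on_endo_ge_imp_id:
  fixes f :: "nat \<Rightarrow> nat"
  assumes "finite A" "inj_on f A" "f ` A \<subseteq> A" "\<And>j. j \<in> A \<Longrightarrow> j \<le> f j" "j \<in> A"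
  shows "f j = j"
proof (rule ccontr)
  assume "f j \<noteq> j"
  then have "sum id A < sum f A"
    using assms(4,5)
    by (intro sum_strict_mono_ex1[OF assms(1)]) (auto intro!: bexI[of _ j] simp: le_neq_implies_less)
  then show False using sum_inj_on_endo[OF assms(1-3)] by simp
qed

definition tent_height :: "nat \<Rightarrow> nat \<Rightarrow> nat \<Rightarrow> nat \<Rightarrow> nat" where
  "tent_height p r T s = min (r + (p - 1) * s) (r + p * T - s)"

text \<open>The path from \<open>v\<close> that rises for \<open>T\<close> steps and then falls straight to height 0.\<close>
definition tent_path :: "nat \<Rightarrow> vertex \<Rightarrow> nat \<Rightarrow> vertex list" where
  "tent_path p v T =
     map (\<lambda>s. (fst v + int s, tent_height p (snd v) T s)) [0..<snd v + p * T + 1]"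

lemma tent_height_rise:
  assumes "0 < p" "s \<le> T"
  shows "tent_height p r T s = r + (p - 1) * s"
proof -
  have "(p - 1) * s + s = p * s" using assms(1) by (cases p) auto
  moreover have "p * s \<le> p * T" using assms(2) by simp
  ultimately show ?thesis unfolding tent_height_def by linarith
qed

lemma tent_height_fall:
  assumes "0 < p" "T \<le> s"
  shows "tent_height p r T s = r + p * T - s"
proof -
  have "(p - 1) * s + s = p * s" using assms(1) by (cases p) auto
  moreover have "p * T \<le> p * s" using assms(2) by simp
  ultimately show ?thesis unfolding tent_height_def by linarith
qed

lemma length_tent_path [simp]: "length (tent_path p v T) = snd v + p * T + 1"
  by (simp add: tent_path_def)

lemma nth_tent_path:
  "s < snd v + p * T + 1 \<Longrightarrow> tent_path p v T ! s = (fst v + int s, tent_height p (snd v) T s)"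
  by (simp add: tent_path_def del: upt_Suc)

lemma hd_tent_path: "0 < p \<Longrightarrow> hd (tent_path p v T) = v"
  by (simp add: tent_path_def hd_map tent_height_rise del: upt_Suc)

lemma last_tent_path:
  assumes "0 < p"
  shows "last (tent_path p v T) = (fst v + int (snd v + p * T), 0)"
proof -
  have "T \<le> snd v + p * T" using assms by (simp add: trans_le_add2)
  then show ?thesis by (simp add: tent_path_def last_map tent_height_fall assms del: upt_Suc)
qed

lemma tent_height_add:
  assumes "0 < p" "s \<le> r + p * T"
  shows "s + tent_height p r T s = r + p * min s T"
proof -
  have "(p - 1) * s + s = p * s" using assms(1) by (cases p) auto
  then show ?thesis
    using assms by (cases "s \<le> T") (auto simp: tent_height_rise tent_height_fall min_def)
qed

lemma is_path_tent_path:
  assumes "0 < p" "is_vertex p v"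
  shows "is_path p (tent_path p v T)"
proof -
  let ?xs = "tent_path p v T" and ?h = "tent_height p (snd v) T"
  have vertex: "is_vertex p u" if u: "u \<in> set ?xs" for u
  proof -
    obtain s where s: "s \<le> snd v + p * T" "u = (fst v + int s, ?h s)"
      using u unfolding tent_path_def set_map set_upt by auto
    have "fst u + int (snd u) = fst v + int (snd v) + int p * int (min s T)"
      using arg_cong[OF tent_height_add[OF assms(1) s(1)], of int] s(2) by simp
    then show ?thesis using assms(2) by (simp add: is_vertex_def)
  qed
  have "is_rise p (?xs ! s) (?xs ! Suc s) \<or> is_fall p (?xs ! s) (?xs ! Suc s)"
    if s: "Suc s < length ?xs" for s
  proof (cases "s < T")
    case True
    then show ?thesis
      using s by (simp add: is_rise_def nth_tent_path tent_height_rise[OF assms(1)])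
  next
    case False
    then have "?h s = snd v + p * T - s" "?h (Suc s) = snd v + p * T - Suc s"
      by (simp_all add: tent_height_fall[OF assms(1)])
    then have "is_fall p (?xs ! s) (?xs ! Suc s)"
      using s by (simp add: is_fall_def nth_tent_path)
    then show ?thesis ..
  qed
  moreover have "?xs \<noteq> []" by (simp add: tent_path_def)
  ultimately show ?thesis
    using vertex by (simp add: is_path_def is_edge_def)
qed

lemma path_weight_tent_path:
  assumes "0 < p"
  shows "path_weight p V (tent_path p v T) = (\<Prod>k = 1..snd v + (p - 1) * T. V k)"
proof -
  define K where "K = snd v + (p - 1) * T"
  have N: "snd v + p * T = T + K"
    using assms by (cases p) (auto simp: K_def)
  define w where "w i = edge_weight p V (tent_path p v T ! i) (tent_path p v T ! Suc i)" for i
  have rise: "w i = 1" if "i < T" for i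
    using that N
    by (simp add: w_def edge_weight_def is_rise_def nth_tent_path tent_height_rise[OF assms])
  have fall: "w i = V (T + K - i)" if "i \<in> {T..<T + K}" for i
  proof -
    have "tent_height p (snd v) T i = T + K - i" "tent_height p (snd v) T (Suc i) = T + K - Suc i"
      using that N by (auto simp: tent_height_fall[OF assms])
    then show ?thesis
      using that N by (auto simp: w_def edge_weight_def is_rise_def nth_tent_path)
  qed
  have "path_weight p V (tent_path p v T) = prod w ({..<T} \<union> {T..<T + K})"
    unfolding path_weight_conv_prod w_def using N by (simp add: ivl_disj_un_one(2))
  also have "\<dots> = prod w {T..<T + K}"
    using rise by (subst prod.union_disjoint) auto
  also have "\<dots> = (\<Prod>i = T..<T + K. V (T + K - i))"
    using fall by (rule prod.cong[OF refl])
  also have "\<dots> = (\<Prod>k = 1..K. V k)"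
    by (rule prod.reindex_bij_witness[where i = "\<lambda>k. T + K - k" and j = "\<lambda>i. T + K - i"]) auto
  finally show ?thesis unfolding K_def .
qed

lemma path_snd_nth_le_tent_height:
  assumes "0 < p" "is_path p xs" "snd (hd xs) = r" "snd (last xs) = 0"
    and "length xs = r + p * T + 1" "s < length xs"
  shows "snd (xs ! s) \<le> tent_height p r T s"
proof -
  have ne: "xs \<noteq> []" using assms(5) by auto
  have "snd (xs ! s) \<le> snd (xs ! 0) + (p - 1) * s"
    using path_snd_nth_rise_bound[OF assms(2), of 0 s] assms(6) by simp
  moreover have "snd (xs ! s) \<le> snd (xs ! (s + (r + p * T - s))) + (r + p * T - s)"
    using assms(5,6) by (intro path_snd_nth_fall_bound[OF assms(2)]) simp
  moreover have "snd (xs ! 0) = r" "snd (xs ! (s + (r + p * T - s))) = 0"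
    using assms(3-6) ne by (simp_all add: hd_conv_nth last_conv_nth)
  ultimately show ?thesis
    using assms(6) by (simp add: tent_height_def)
qed

lemma path_above_tent_path:
  assumes "0 < p" "is_path p xs" "hd xs = v" "snd (last xs) = 0"
    and "length xs = snd v + p * T + 1"
  shows "path_above (tent_path p v T) xs"
  unfolding path_above_def
proof clarify
  fix k l assume "(k, l) \<in> set xs"
  then obtain s where s: "s < length xs" "xs ! s = (k, l)" by (auto simp: in_set_conv_nth)
  have "xs ! 0 = v" using assms(2,3) by (simp add: hd_conv_nth is_path_def)
  then have "k = fst v + int s" using path_fst_nth[OF assms(2) s(1)] s(2) by simp
  moreover have "l \<le> tent_height p (snd v) T s"
    using path_snd_nth_le_tent_height[OF assms(1,2) _ assms(4,5) s(1)] assms(3) s(2) by simp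
  moreover have "tent_path p v T ! s \<in> set (tent_path p v T)"
    using s(1) assms(5) by simp
  ultimately show "\<exists>l'. (k, l') \<in> set (tent_path p v T) \<and> l \<le> l'"
    using s(1) assms(5) by (auto simp: nth_tent_path)
qed

lemma path_eq_tent_path:
  assumes "0 < p" "is_path p xs" "hd xs = v" "snd (last xs) = 0"
    and "length xs = snd v + p * T + 1" "snd (xs ! T) = snd v + (p - 1) * T"
  shows "xs = tent_path p v T"
proof (rule nth_equalityI)
  show "length xs = length (tent_path p v T)" using assms(5) by simp
  fix s assume s: "s < length xs"
  have x0: "xs ! 0 = v" using assms(2,3) by (simp add: hd_conv_nth is_path_def)
  have T: "T < length xs" using assms(1,5) by (simp add: trans_le_add2 less_Suc_eq_le)
  have "tent_height p (snd v) T s \<le> snd (xs ! s)"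
  proof (cases "s \<le> T")
    case True
    have "snd (xs ! (s + (T - s))) \<le> snd (xs ! s) + (p - 1) * (T - s)"
      using T True by (intro path_snd_nth_rise_bound[OF assms(2)]) simp
    moreover have "(p - 1) * T = (p - 1) * s + (p - 1) * (T - s)"
      using True by (simp add: add_mult_distrib2[symmetric])
    ultimately show ?thesis
      using True assms(6) by (simp add: tent_height_rise[OF assms(1)])
  next
    case False
    have "snd (xs ! T) \<le> snd (xs ! (T + (s - T))) + (s - T)"
      using s False by (intro path_snd_nth_fall_bound[OF assms(2)]) simp
    moreover have "p * T = (p - 1) * T + T"
      using assms(1) by (cases p) auto
    ultimately show ?thesis
      using False assms(6) by (simp add: tent_height_fall[OF assms(1)])
  qed
  then have "snd (xs ! s) = tent_height p (snd v) T s"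
    using path_snd_nth_le_tent_height[OF assms(1,2) _ assms(4,5) s] assms(3) by simp
  then show "xs ! s = tent_path p v T ! s"
    using path_fst_nth[OF assms(2) s] x0 s assms(5) by (simp add: nth_tent_path prod_eq_iff)
qed

definition peak_time :: "nat \<Rightarrow> nat \<Rightarrow> nat \<Rightarrow> nat" where
  "peak_time p m j = j + (m + j) div (p - 1)"

definition highest_path :: "nat \<Rightarrow> nat \<Rightarrow> nat \<Rightarrow> vertex list" where
  "highest_path p m j = tent_path p (src p (m + j)) (peak_time p m j)"

lemma fst_src_add_peak_time: "fst (src p (m + j)) + int (peak_time p m j) = - int m"
  by (simp add: src_def peak_time_def)

lemma snd_src_add_peak_time:
  assumes "2 \<le> p"
  shows "snd (src p (m + j)) + (p - 1) * peak_time p m j = m + j * p"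
proof -
  have "(m + j) mod (p - 1) + (p - 1) * ((m + j) div (p - 1)) = m + j" by simp
  moreover have "(p - 1) * j + j = j * p" using assms by (cases p) (auto simp: algebra_simps)
  ultimately show ?thesis by (simp add: src_def peak_time_def algebra_simps)
qed

lemma snd_src_add_peak_time_length:
  assumes "2 \<le> p"
  shows "snd (src p (m + j)) + p * peak_time p m j = peak_time p m j + j * p + m"
proof -
  have "p * peak_time p m j = (p - 1) * peak_time p m j + peak_time p m j"
    using assms by (cases p) auto
  then show ?thesis using snd_src_add_peak_time[OF assms, of m j] by simp
qed

lemma is_vertex_src:
  assumes "2 \<le> p"
  shows "is_vertex p (src p k)"
proof -
  have "int k = int (p - 1) * int (k div (p - 1)) + int (k mod (p - 1))"
    by (metis div_mult_mod_eq mult.commute of_nat_add of_nat_mult)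
  then have "fst (src p k) + int (snd (src p k)) = - int p * int (k div (p - 1))"
    using assms by (simp add: src_def of_nat_diff algebra_simps)
  then show ?thesis by (simp add: is_vertex_def)
qed

lemma length_path_src_snk:
  assumes "is_path p xs" "hd xs = src p (m + j)" "last xs = snk p s"
  shows "length xs = peak_time p m j + s * p + m + 1"
proof -
  have ne: "xs \<noteq> []" using is_path_ne[OF assms(1)] .
  have "fst (last xs) = fst (hd xs) + int (length xs - 1)"
    using path_fst_nth[OF assms(1), of "length xs - 1"] ne by (simp add: hd_conv_nth last_conv_nth)
  then have "int (s * p) = - int m - int (peak_time p m j) + int (length xs - 1)"
    using assms(2,3) fst_src_add_peak_time[of p m j] by (simp add: snk_def)
  then have "int (length xs - 1) = int (peak_time p m j + s * p + m)" by simp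
  then show ?thesis using ne by (simp only: of_nat_eq_iff length_greater_0_conv[symmetric])
qed

lemma path_src_snk_nth_peak_time:
  assumes "2 \<le> p" "m \<le> p - 1" "is_path p xs" "hd xs = src p (m + j)" "last xs = snk p s"
  obtains \<tau> where "\<tau> \<le> j" "\<tau> \<le> s" "peak_time p m j < length xs"
    "xs ! peak_time p m j = (- int m, m + \<tau> * p)"
proof -
  define T where "T = peak_time p m j"
  have len: "length xs = T + (s * p + m) + 1"
    using length_path_src_snk[OF assms(3-5)] by (simp add: T_def)
  have x0: "xs ! 0 = src p (m + j)" using assms(4) is_path_ne[OF assms(3)] by (simp add: hd_conv_nth)
  have col: "fst (xs ! T) = - int m"
    using path_fst_nth[OF assms(3), of T] len x0 fst_src_add_peak_time[of p m j] by (simp add: T_def)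
  define h where "h = snd (xs ! T)"
  have "h \<le> snd (xs ! 0) + (p - 1) * T"
    using path_snd_nth_rise_bound[OF assms(3), of 0 T] len by (simp add: h_def)
  then have h_j: "h \<le> m + j * p"
    using snd_src_add_peak_time[OF assms(1), of m j] x0 by (simp add: T_def)
  have "h \<le> snd (xs ! (T + (s * p + m))) + (s * p + m)"
    using path_snd_nth_fall_bound[OF assms(3), of T "s * p + m"] len by (simp add: h_def)
  moreover have "snd (xs ! (T + (s * p + m))) = 0"
    using assms(5) last_conv_nth[OF is_path_ne[OF assms(3)]] len by (simp add: snk_def)
  ultimately have h_s: "h \<le> m + s * p" by simp
  have "is_vertex p (xs ! T)" using assms(3) len by (simp add: is_path_def)
  then have "int p dvd int h - int m" using col by (simp add: is_vertex_def h_def dvd_eq_mod_eq_0)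
  then have "int h mod int p = int m mod int p" by (simp add: mod_eq_dvd_iff)
  then have "h mod p = m" using assms(1,2) by (simp flip: of_nat_mod)
  then have h: "h = m + h div p * p" by (metis mod_div_mult_eq)
  show thesis
  proof
    have "h div p * p \<le> j * p" "h div p * p \<le> s * p" using h h_j h_s by linarith+
    then show "h div p \<le> j" "h div p \<le> s" using assms(1) by simp_all
    show "peak_time p m j < length xs" using len by (simp add: T_def)
    show "xs ! peak_time p m j = (- int m, m + h div p * p)"
      using col h by (simp add: prod_eq_iff h_def T_def)
  qed
qed

lemma is_path_highest_path: "2 \<le> p \<Longrightarrow> is_path p (highest_path p m j)"
  by (simp add: highest_path_def is_path_tent_path is_vertex_src)

lemma hd_highest_path: "2 \<le> p \<Longrightarrow> hd (highest_path p m j) = src p (m + j)"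
  by (simp add: highest_path_def hd_tent_path)

lemma last_highest_path:
  assumes "2 \<le> p"
  shows "last (highest_path p m j) = snk p j"
  using assms fst_src_add_peak_time[of p m j]
  by (simp add: highest_path_def last_tent_path snd_src_add_peak_time_length snk_def)

lemma peak_mem_highest_path:
  assumes "2 \<le> p"
  shows "(- int m, m + j * p) \<in> set (highest_path p m j)"
proof -
  have "peak_time p m j < length (highest_path p m j)"
    using snd_src_add_peak_time_length[OF assms, of m j] by (simp add: highest_path_def)
  moreover have "highest_path p m j ! peak_time p m j = (- int m, m + j * p)"
    using assms fst_src_add_peak_time[of p m j] snd_src_add_peak_time[OF assms, of m j]
      snd_src_add_peak_time_length[OF assms, of m j]
    by (simp add: highest_path_def nth_tent_path tent_height_rise)
  ultimately show ?thesis by (metis nth_mem)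
qed

lemma path_weight_highest_path:
  assumes "2 \<le> p"
  shows "path_weight p V (highest_path p m j) = (\<Prod>k = 1..j * p + m. V k)"
  using assms snd_src_add_peak_time[OF assms, of m j]
  by (simp add: highest_path_def path_weight_tent_path add.commute)

lemma path_above_highest_path:
  assumes "2 \<le> p" "is_path p xs" "hd xs = src p (m + j)" "last xs = snk p j"
  shows "path_above (highest_path p m j) xs"
  unfolding highest_path_def using assms
  by (intro path_above_tent_path)
    (simp_all add: snk_def length_path_src_snk snd_src_add_peak_time_length)

lemma path_eq_highest_path:
  assumes "2 \<le> p" "is_path p xs" "hd xs = src p (m + j)" "last xs = snk p j"
    and "xs ! peak_time p m j = (- int m, m + j * p)"
  shows "xs = highest_path p m j"
  unfolding highest_path_def using assms snd_src_add_peak_time[OF assms(1), of m j]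
  by (intro path_eq_tent_path)
    (simp_all add: snk_def length_path_src_snk snd_src_add_peak_time_length)

text \<open>Off its height offset \<open>jp\<close>, the highest path to \<open>B\<^sub>j\<close> has a profile independent of \<open>j\<close>,
  so highest paths to different sinks are vertex-disjoint.\<close>
lemma highest_path_profile:
  assumes "2 \<le> p" "(k, h) \<in> set (highest_path p m j)"
  shows "int h = int (j * p) + (if k \<le> - int m then int m + (int p - 1) * (int m + k) else - k)"
proof -
  define T where "T = peak_time p m j"
  define r where "r = snd (src p (m + j))"
  obtain s where s: "s \<le> r + p * T" "k = fst (src p (m + j)) + int s" "h = tent_height p r T s"
    using assms(2) unfolding highest_path_def tent_path_def set_map set_upt T_def r_def by auto
  have c: "k = int s - int T - int m" using s(2) fst_src_add_peak_time[of p m j] T_def by simp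
  have "int (r + (p - 1) * T) = int (m + j * p)"
    using snd_src_add_peak_time[OF assms(1), of m j] by (simp only: r_def T_def)
  then have peak: "int r + (int p - 1) * int T = int m + int (j * p)"
    using assms(1) by (simp add: of_nat_diff)
  show ?thesis
  proof (cases "s \<le> T")
    case True
    then have "int h = int r + (int p - 1) * int s"
      using assms(1) s(3) by (simp add: tent_height_rise of_nat_diff)
    then have "int h = int (j * p) + (int m + (int p - 1) * (int s - int T))"
      using peak by (simp add: algebra_simps)
    moreover have "int s - int T = int m + k" "k \<le> - int m" using True c by simp_all
    ultimately show ?thesis by simp
  next
    case False
    then have "int h = int r + int p * int T - int s"
      using assms(1) s by (simp add: tent_height_fall of_nat_diff)
    then show ?thesis using False c peak by (simp add: algebra_simps)
  qed
qed

lemma highest_path_disjoint: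
  assumes "2 \<le> p" "i \<noteq> j"
  shows "set (highest_path p m i) \<inter> set (highest_path p m j) = {}"
proof (rule ccontr)
  assume "set (highest_path p m i) \<inter> set (highest_path p m j) \<noteq> {}"
  then obtain k h where "(k, h) \<in> set (highest_path p m i)" "(k, h) \<in> set (highest_path p m j)"
    by auto
  then have "int (i * p) = int (j * p)"
    using highest_path_profile[OF assms(1)] by (smt (verit))
  then show False using assms by simp
qed

lemma nonint_config_highest_paths:
  assumes "2 \<le> p"
  shows "nonint_config p m n (map (highest_path p m) [0..<n + 1])"
proof -
  have "last ` set (map (highest_path p m) [0..<n + 1]) = snk p ` {0..n}"
    by (auto simp: image_image last_highest_path[OF assms] atLeastLessThanSuc_atLeastAtMost
        simp del: upt_Suc)
  then show ?thesis
    using assms by (auto simp: nonint_config_def is_path_highest_path hd_highest_path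
        highest_path_disjoint simp del: upt_Suc)
qed

lemma nonint_config_disjoint:
  assumes "nonint_config p m n Ps" "i \<le> n" "j \<le> n" "i \<noteq> j"
  shows "set (Ps ! i) \<inter> set (Ps ! j) = {}"
  using assms unfolding nonint_config_def by (metis inf_commute linorder_neqE_nat)

lemma nonint_config_last_nth_mem_sinks:
  assumes "nonint_config p m n Ps" "i \<le> n"
  obtains s where "s \<le> n" "last (Ps ! i) = snk p s"
proof -
  have "Ps ! i \<in> set Ps" using assms unfolding nonint_config_def by simp
  then have "last (Ps ! i) \<in> snk p ` {0..n}" using assms(1) unfolding nonint_config_def by blast
  then show thesis using that by auto
qed

lemma nonint_config_nth_peak_time:
  assumes "2 \<le> p" "m \<le> p - 1" "nonint_config p m n Ps" "i \<le> n"
  shows "Ps ! i ! peak_time p m i = (- int m, m + i * p)"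
proof -
  have "\<exists>\<tau>. \<tau> \<le> j \<and> Ps ! j ! peak_time p m j = (- int m, m + \<tau> * p) \<and>
      (- int m, m + \<tau> * p) \<in> set (Ps ! j)" if j: "j \<in> {0..n}" for j
  proof -
    obtain s where "last (Ps ! j) = snk p s"
      using nonint_config_last_nth_mem_sinks[OF assms(3), of j] j by auto
    moreover have "is_path p (Ps ! j)" "hd (Ps ! j) = src p (m + j)"
      using assms(3) j unfolding nonint_config_def by auto
    ultimately show ?thesis
      using path_src_snk_nth_peak_time[OF assms(1,2)] by (metis nth_mem)
  qed
  then obtain \<tau> where \<tau>: "\<And>j. j \<in> {0..n} \<Longrightarrow> \<tau> j \<le> j \<and>
      Ps ! j ! peak_time p m j = (- int m, m + \<tau> j * p) \<and>
      (- int m, m + \<tau> j * p) \<in> set (Ps ! j)"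
    by metis
  have "inj_on \<tau> {0..n}"
  proof (rule inj_onI, rule ccontr)
    fix j k assume "j \<in> {0..n}" "k \<in> {0..n}" "\<tau> j = \<tau> k" "j \<noteq> k"
    then show False
      using \<tau> nonint_config_disjoint[OF assms(3)] by (metis disjoint_iff atLeastAtMost_iff)
  qed
  then have "\<tau> i = i"
    by (rule inj_on_endo_le_imp_id[rotated]) (use \<tau> assms(4) in \<open>force+\<close>)
  then show ?thesis using \<tau> assms(4) by simp
qed

lemma nonint_config_last_nth:
  assumes "2 \<le> p" "m \<le> p - 1" "nonint_config p m n Ps" "i \<le> n"
  shows "last (Ps ! i) = snk p i"
proof -
  have "\<exists>s. j \<le> s \<and> s \<le> n \<and> last (Ps ! j) = snk p s" if j: "j \<in> {0..n}" for j
  proof -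
    obtain s where s: "s \<le> n" "last (Ps ! j) = snk p s"
      using nonint_config_last_nth_mem_sinks[OF assms(3), of j] j by auto
    moreover have "is_path p (Ps ! j)" "hd (Ps ! j) = src p (m + j)"
      using assms(3) j unfolding nonint_config_def by auto
    ultimately obtain \<tau> where "\<tau> \<le> s" "Ps ! j ! peak_time p m j = (- int m, m + \<tau> * p)"
      using path_src_snk_nth_peak_time[OF assms(1,2)] by metis
    moreover have "Ps ! j ! peak_time p m j = (- int m, m + j * p)"
      using nonint_config_nth_peak_time[OF assms(1-3)] j by simp
    ultimately show ?thesis using s assms(1) by auto
  qed
  then obtain \<sigma> where \<sigma>:
    "\<And>j. j \<in> {0..n} \<Longrightarrow> j \<le> \<sigma> j \<and> \<sigma> j \<le> n \<and> last (Ps ! j) = snk p (\<sigma> j)"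
    by metis
  have "inj_on \<sigma> {0..n}"
  proof (rule inj_onI, rule ccontr)
    fix j k assume jk: "j \<in> {0..n}" "k \<in> {0..n}" "\<sigma> j = \<sigma> k" "j \<noteq> k"
    then have "last (Ps ! j) \<in> set (Ps ! j)" "last (Ps ! k) \<in> set (Ps ! k)"
      using assms(3) unfolding nonint_config_def by (auto simp: is_path_def)
    then show False
      using jk \<sigma> nonint_config_disjoint[OF assms(3)] by (metis disjoint_iff atLeastAtMost_iff)
  qed
  then have "\<sigma> i = i"
    by (rule inj_on_endo_ge_imp_id[rotated]) (use \<sigma> assms(4) in \<open>force+\<close>)
  then show ?thesis using \<sigma> assms(4) by simp
qed

lemma nonint_config_eq_highest_paths:
  assumes "2 \<le> p" "m \<le> p - 1" "nonint_config p m n Ps"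
  shows "Ps = map (highest_path p m) [0..<n + 1]"
proof (rule nth_equalityI)
  show "length Ps = length (map (highest_path p m) [0..<n + 1])"
    using assms(3) by (simp add: nonint_config_def)
  fix i assume "i < length Ps"
  then have i: "i \<le> n" using assms(3) by (simp add: nonint_config_def)
  then have "Ps ! i = highest_path p m i"
    using assms(3) nonint_config_last_nth[OF assms i] nonint_config_nth_peak_time[OF assms i]
    by (intro path_eq_highest_path[OF assms(1)]) (auto simp: nonint_config_def)
  then show "Ps ! i = map (highest_path p m) [0..<n + 1] ! i"
    using i by (simp del: upt_Suc)
qed

theorem proposition2:
  fixes p m n :: nat and V :: "nat \<Rightarrow> 'a::comm_semiring_1"
  assumes "p \<ge> 2" and "m \<le> p - 1"
  shows "(\<exists>!Ps. nonint_config p m n Ps) \<and>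
         (\<forall>Ps. nonint_config p m n Ps \<longrightarrow>
           (\<forall>i\<le>n. last (Ps ! i) = snk p i \<and>
              (- int m, m + i * p) \<in> set (Ps ! i) \<and>
              (\<forall>Q. is_path p Q \<and> hd Q = src p (m + i) \<and> last Q = snk p i
                   \<longrightarrow> path_above (Ps ! i) Q)) \<and>
           config_weight p V Ps = (\<Prod>i=0..n. \<Prod>j=1..i * p + m. V j))"
proof -
  let ?Ps = "map (highest_path p m) [0..<n + 1]"
  have unique: "Ps = ?Ps" if "nonint_config p m n Ps" for Ps
    using nonint_config_eq_highest_paths[OF assms that] .
  have "config_weight p V ?Ps = (\<Prod>i=0..n. \<Prod>j=1..i * p + m. V j)"
    by (simp add: config_weight_def path_weight_highest_path[OF assms(1)] comp_def
        prod.distinct_set_conv_list[symmetric] atLeastLessThanSuc_atLeastAtMost del: upt_Suc)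
  then show ?thesis
    using nonint_config_highest_paths[OF assms(1)]
    by (auto dest!: unique simp: last_highest_path[OF assms(1)] peak_mem_highest_path[OF assms(1)]
        path_above_highest_path[OF assms(1)] simp del: upt_Suc)
qed

end
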